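(* Let $\mathcal{G}$ be a finite groupoid (finitely many objects and finite hom-sets) and let $Q$ be the quiver arising from it, with connected components $C_1,\dots,C_k$. Let $A$ be the adjacency matrix of $Q$ and let $A_{C_1},\dots,A_{C_k}$ be the diagonal blocks of $A$ corresponding to the connected components. Then for each $i$, the matrix $A_{C_i}\otimes A_{C_i}$ satisfies the quantum Yang–Baxter equation; equivalently, there exists a scalar $\mu_i$ with $A_{C_i}^2=\mu_i A_{C_i}$. Furthermore, there exists a single scalar $\mu$ with $A^2=\mu A$ if and only if $\mu_1=\mu_2=\dots=\mu_k$.
   Context: The quiver arising from a groupoid $\mathcal{G}$ has the objects of $\mathcal{G}$ as vertices and, for objects $x,y$, one arrow from $x$ to $y$ for each morphism in $\mathrm{Hom}(x,y)$ (identities included). Its adjacency matrix is $A_{xy}=|\mathrm{Hom}(x,y)|$. Connected components are the classes of objects $x,y$ with $\mathrm{Hom}(x,y)\neq\emptyset$, and $A_{C}$ is the principal submatrix of $A$ on the objects of $C$. An $m^2\times m^2$ matrix $X$ satisfies the quantum Yang–Baxter equation if $(X\otimes I_m)(I_m\otimes X)(X\otimes I_m)=(I_m\otimes X)(X\otimes I_m)(I_m\otimes X)$, where $\otimes$ is the Kronecker product and $I_m$ the $m\times m$ identity. *)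

theory Defs
  imports "Jordan_Normal_Form.Matrix" "Jordan_Normal_Form.DL_Submatrix"
begin

text \<open>A finite groupoid with object set {0..<n}: hom-sets Hom x y, composition
  cmp g f (first f then g), identities ident x. Hom-sets of distinct pairs are disjoint.\<close>
definition finite_groupoid ::
  "nat \<Rightarrow> (nat \<Rightarrow> nat \<Rightarrow> 'm set) \<Rightarrow> ('m \<Rightarrow> 'm \<Rightarrow> 'm) \<Rightarrow> (nat \<Rightarrow> 'm) \<Rightarrow> bool" where
  "finite_groupoid n Hom cmp ident \<longleftrightarrow>
     (\<forall>x<n. \<forall>y<n. finite (Hom x y)) \<and>
     (\<forall>x<n. \<forall>y<n. \<forall>x'<n. \<forall>y'<n. (x, y) \<noteq> (x', y') \<longrightarrow> Hom x y \<inter> Hom x' y' = {}) \<and>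
     (\<forall>x<n. ident x \<in> Hom x x) \<and>
     (\<forall>x<n. \<forall>y<n. \<forall>z<n. \<forall>f\<in>Hom x y. \<forall>g\<in>Hom y z. cmp g f \<in> Hom x z) \<and>
     (\<forall>x<n. \<forall>y<n. \<forall>f\<in>Hom x y. cmp f (ident x) = f \<and> cmp (ident y) f = f) \<and>
     (\<forall>w<n. \<forall>x<n. \<forall>y<n. \<forall>z<n. \<forall>f\<in>Hom w x. \<forall>g\<in>Hom x y. \<forall>h\<in>Hom y z.
        cmp h (cmp g f) = cmp (cmp h g) f) \<and>
     (\<forall>x<n. \<forall>y<n. \<forall>f\<in>Hom x y. \<exists>g\<in>Hom y x. cmp g f = ident x \<and> cmp f g = ident y)"

definition groupoid_adj :: "nat \<Rightarrow> (nat \<Rightarrow> nat \<Rightarrow> 'm set) \<Rightarrow> real mat" where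
  "groupoid_adj n Hom = mat n n (\<lambda>(x, y). real (card (Hom x y)))"

definition groupoid_components :: "nat \<Rightarrow> (nat \<Rightarrow> nat \<Rightarrow> 'm set) \<Rightarrow> nat set set" where
  "groupoid_components n Hom = {{y. y < n \<and> Hom x y \<noteq> {}} | x. x < n}"

definition principal_submatrix :: "'a mat \<Rightarrow> nat set \<Rightarrow> 'a mat" where
  "principal_submatrix A C = submatrix A C C"

definition kronecker :: "'a::times mat \<Rightarrow> 'a mat \<Rightarrow> 'a mat" where
  "kronecker A B = mat (dim_row A * dim_row B) (dim_col A * dim_col B)
     (\<lambda>(i, j). A $$ (i div dim_row B, j div dim_col B) * B $$ (i mod dim_row B, j mod dim_col B))"

definition qybe :: "nat \<Rightarrow> 'a::comm_ring_1 mat \<Rightarrow> bool" where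
  "qybe m X \<longleftrightarrow> X \<in> carrier_mat (m^2) (m^2) \<and>
     kronecker X (1\<^sub>m m) * kronecker (1\<^sub>m m) X * kronecker X (1\<^sub>m m) =
     kronecker (1\<^sub>m m) X * kronecker X (1\<^sub>m m) * kronecker (1\<^sub>m m) X"

end

(*
  Objects x, y in the same connected component are isomorphic, and composing with an
  isomorphism x -> y is a bijection Hom(x, c) -> Hom(y, c) (and dually Hom(c, x) -> Hom(c, y)).
  Hence on a component C of m objects every hom-set has the size g of the automorphism group
  of any of its objects: A_C = g J_m with J_m the all-ones matrix, so A_C^2 = (m g) A_C, and
  A_C (x) A_C is a constant matrix, for which the Yang--Baxter equation is a counting identity.
  The same bijections give (A^2)_xy = mu_x A_xy with mu_x = m g the scalar of the component of x;
  as A has a positive diagonal, A^2 = mu A holds exactly when every component scalar equals mu.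
*)
theory Submission
  imports Defs
begin

lemma mod_less_of_less_mult: "i < a * b \<Longrightarrow> i mod b < (b::nat)"
  by (cases "b = 0") simp_all

lemma sum_lessThan_mult_div_mod:
  fixes f :: "nat \<Rightarrow> nat \<Rightarrow> 'a::comm_monoid_add"
  shows "(\<Sum>k<q * b. f (k div b) (k mod b)) = (\<Sum>u<q. \<Sum>t<b. f u t)"
proof -
  have digits_bound: "u * b + t < q * b" if "u < q" "t < b" for u t
  proof -
    have "u * b + t < Suc u * b" using \<open>t < b\<close> by simp
    also have "\<dots> \<le> q * b" using \<open>u < q\<close> by (intro mult_le_mono1) simp
    finally show ?thesis .
  qed
  have "(\<Sum>k<q * b. f (k div b) (k mod b)) = (\<Sum>(u, t)\<in>{..<q} \<times> {..<b}. f u t)"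
    by (rule sum.reindex_bij_witness[where i = "\<lambda>(u, t). u * b + t" and j = "\<lambda>k. (k div b, k mod b)"])
      (auto simp: less_mult_imp_div_less mod_less_of_less_mult digits_bound)
  then show ?thesis
    by (simp add: sum.cartesian_product)
qed

lemma sum_lessThan_cube_digits:
  fixes f :: "nat \<Rightarrow> nat \<Rightarrow> nat \<Rightarrow> 'a::comm_monoid_add"
  shows "(\<Sum>k<m^3. f (k div m^2) (k div m mod m) (k mod m)) = (\<Sum>u<m. \<Sum>v<m. \<Sum>w<m. f u v w)"
proof -
  have "(\<Sum>k<m^3. f (k div m^2) (k div m mod m) (k mod m))
      = (\<Sum>r<m * m. \<Sum>w<m. f (r div m) (r mod m) w)"
    using sum_lessThan_mult_div_mod[where f = "\<lambda>r w. f (r div m) (r mod m) w" and q = "m * m" and b = m]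
    by (simp add: power2_eq_square power3_eq_cube div_mult2_eq)
  also have "\<dots> = (\<Sum>u<m. \<Sum>v<m. \<Sum>w<m. f u v w)"
    using sum_lessThan_mult_div_mod[where f = "\<lambda>u v. \<Sum>w<m. f u v w" and q = m and b = m] by simp
  finally show ?thesis .
qed

lemma kronecker_const_mat:
  "kronecker (mat a b (\<lambda>_. x)) (mat c d (\<lambda>_. y)) = mat (a * c) (b * d) (\<lambda>_. x * y)"
  by (rule eq_matI) (auto simp: kronecker_def less_mult_imp_div_less mod_less_of_less_mult)

lemma const_mat_mult:
  "mat m k (\<lambda>_. x) * mat k l (\<lambda>_. y) = mat m l (\<lambda>_. of_nat k * (x * y :: 'a::comm_semiring_1))"
  by (rule eq_matI) (auto simp: scalar_prod_def)

lemma index_const_mat_mult: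
  assumes "M \<in> carrier_mat n c" "i < r" "j < c"
  shows "(mat r n (\<lambda>_. a) * M) $$ (i, j) = a * (\<Sum>k<n. M $$ (k, j))"
  using assms by (simp add: scalar_prod_def lessThan_atLeast0 sum_distrib_left)

lemma index_mult_const_mat:
  assumes "M \<in> carrier_mat r n" "i < r" "j < c"
  shows "(M * mat n c (\<lambda>_. a)) $$ (i, j) = (\<Sum>k<n. M $$ (i, k)) * a"
  using assms by (simp add: scalar_prod_def lessThan_atLeast0 sum_distrib_right)

lemma braid_relation_of_const_product:
  fixes P Q :: "'a::comm_semiring_1 mat"
  assumes P: "P \<in> carrier_mat N N" and Q: "Q \<in> carrier_mat N N"
    and PQ: "P * Q = mat N N (\<lambda>_. a)"
    and column_sums: "\<And>j. j < N \<Longrightarrow> (\<Sum>k<N. P $$ (k, j)) = s"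
    and row_sums: "\<And>i. i < N \<Longrightarrow> (\<Sum>k<N. Q $$ (i, k)) = s"
  shows "P * Q * P = Q * P * Q"
proof (rule eq_matI)
  fix i j assume "i < dim_row (Q * P * Q)" "j < dim_col (Q * P * Q)"
  then have ij: "i < N" "j < N"
    using Q by simp_all
  have "(P * Q * P) $$ (i, j) = a * s"
    unfolding PQ using index_const_mat_mult[OF P ij] column_sums[OF ij(2)] by simp
  moreover have "(Q * P * Q) $$ (i, j) = s * a"
    unfolding assoc_mult_mat[OF Q P Q] PQ using index_mult_const_mat[OF Q ij] row_sums[OF ij(1)] by simp
  ultimately show "(P * Q * P) $$ (i, j) = (Q * P * Q) $$ (i, j)"
    by (simp add: mult.commute)
qed (use P Q in simp_all)

lemma cube_digits_less:
  fixes k m :: nat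
  assumes "k < m^3"
  shows "k div m < m^2" "k mod m < m" "k div m^2 < m" "k mod m^2 < m^2"
proof -
  have "k < m^2 * m" "k < m * m^2"
    using assms by (simp_all add: power2_eq_square power3_eq_cube)
  then show "k div m < m^2" "k mod m < m" "k div m^2 < m" "k mod m^2 < m^2"
    by (simp_all add: less_mult_imp_div_less mod_less_of_less_mult)
qed

lemma kronecker_const_mat_one:
  "kronecker (mat (m^2) (m^2) (\<lambda>_. c)) (1\<^sub>m m)
     = mat (m^3) (m^3) (\<lambda>(i, j). if i mod m = j mod m then c else (0::'a::comm_ring_1))"
proof -
  have "m^2 * m = m^3"
    by (simp add: power2_eq_square power3_eq_cube)
  then show ?thesis
    by (intro eq_matI) (auto simp: kronecker_def cube_digits_less)
qed

lemma kronecker_one_const_mat: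
  "kronecker (1\<^sub>m m) (mat (m^2) (m^2) (\<lambda>_. c))
     = mat (m^3) (m^3) (\<lambda>(i, j). if i div m^2 = j div m^2 then c else (0::'a::comm_ring_1))"
proof -
  have "m * m^2 = m^3"
    by (simp add: power2_eq_square power3_eq_cube)
  then show ?thesis
    by (intro eq_matI) (auto simp: kronecker_def cube_digits_less)
qed

text \<open>For \<open>X = c J\<close> with \<open>J\<close> the all-ones matrix, \<open>X \<otimes> I\<close> and \<open>I \<otimes> X\<close> have
  a constant product: an entry of it counts the indices \<open>k < m\<^sup>3\<close> with two of their
  three base-\<open>m\<close> digits prescribed.\<close>

lemma qybe_const_mat:
  fixes c :: "'a::comm_ring_1"
  shows "qybe m (mat (m^2) (m^2) (\<lambda>_. c))"
proof -
  let ?P = "mat (m^3) (m^3) (\<lambda>(i, j). if i mod m = j mod m then c else 0)"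
  let ?Q = "mat (m^3) (m^3) (\<lambda>(i, j). if i div m^2 = j div m^2 then c else 0)"
  have "?P * ?Q = mat (m^3) (m^3) (\<lambda>_. of_nat m * c^2)"
  proof (rule eq_matI)
    fix i j assume "i < dim_row (mat (m^3) (m^3) (\<lambda>_. of_nat m * c^2))"
      "j < dim_col (mat (m^3) (m^3) (\<lambda>_. of_nat m * c^2))"
    then have ij: "i < m^3" "j < m^3" by simp_all
    have "(?P * ?Q) $$ (i, j)
        = (\<Sum>k<m^3. if k mod m = i mod m then if k div m^2 = j div m^2 then c^2 else 0 else 0)"
      using ij by (auto simp: scalar_prod_def lessThan_atLeast0 power2_eq_square intro: sum.cong)
    also have "\<dots> = of_nat m * c^2"
      using sum_lessThan_cube_digits
          [where f = "\<lambda>u v w. if w = i mod m then if u = j div m^2 then c^2 else 0 else 0"]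
        cube_digits_less ij by (simp flip: sum_distrib_left)
    finally show "(?P * ?Q) $$ (i, j) = mat (m^3) (m^3) (\<lambda>_. of_nat m * c^2) $$ (i, j)"
      using ij by simp
  qed simp_all
  moreover have "(\<Sum>k<m^3. ?P $$ (k, j)) = of_nat (m^2) * c" if "j < m^3" for j
    using sum_lessThan_cube_digits[where f = "\<lambda>u v w. if w = j mod m then c else 0"]
      cube_digits_less that by (simp add: power2_eq_square)
  moreover have "(\<Sum>k<m^3. ?Q $$ (i, k)) = of_nat (m^2) * c" if "i < m^3" for i
  proof -
    have "(\<Sum>k<m^3. ?Q $$ (i, k)) = (\<Sum>k<m^3. if k div m^2 = i div m^2 then c else 0)"
      using that by (auto intro: sum.cong)
    also have "\<dots> = of_nat (m^2) * c"
      using sum_lessThan_cube_digits[where f = "\<lambda>u v w. if u = i div m^2 then c else 0"]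
        cube_digits_less that by (simp add: power2_eq_square flip: sum_distrib_left)
    finally show ?thesis .
  qed
  ultimately have "?P * ?Q * ?P = ?Q * ?P * ?Q"
    by (intro braid_relation_of_const_product[of _ "m^3"]) simp_all
  then show ?thesis
    unfolding qybe_def kronecker_const_mat_one kronecker_one_const_mat by simp
qed

lemma principal_submatrix_const:
  assumes "A \<in> carrier_mat n n" "C \<subseteq> {..<n}" "\<And>i j. i \<in> C \<Longrightarrow> j \<in> C \<Longrightarrow> A $$ (i, j) = c"
  shows "principal_submatrix A C = mat (card C) (card C) (\<lambda>_. c)"
proof -
  have rows: "{i. i < dim_row A \<and> i \<in> C} = C" and cols: "{i. i < dim_col A \<and> i \<in> C} = C"
    using assms(1,2) by auto
  show ?thesis
  proof (rule eq_matI)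
    fix i j assume "i < dim_row (mat (card C) (card C) (\<lambda>_. c))" "j < dim_col (mat (card C) (card C) (\<lambda>_. c))"
    then have "pick C i \<in> C" "pick C j \<in> C"
      by (auto intro: pick_in_set_le)
    then show "principal_submatrix A C $$ (i, j) = mat (card C) (card C) (\<lambda>_. c) $$ (i, j)"
      using \<open>i < _\<close> \<open>j < _\<close> assms(3)
      by (simp add: principal_submatrix_def submatrix_def rows cols)
  qed (simp_all add: principal_submatrix_def submatrix_def rows cols)
qed

lemma smult_mat_cancel:
  fixes \<mu> \<nu> :: "'a::idom"
  assumes "\<mu> \<cdot>\<^sub>m M = \<nu> \<cdot>\<^sub>m M" "i < dim_row M" "j < dim_col M" "M $$ (i, j) \<noteq> 0"
  shows "\<mu> = \<nu>"
proof -
  have "\<mu> * M $$ (i, j) = \<nu> * M $$ (i, j)"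
    using arg_cong[OF assms(1), of "\<lambda>N. N $$ (i, j)"] assms(2,3) by simp
  then show ?thesis
    using assms(4) by simp
qed

definition hom_component :: "nat \<Rightarrow> (nat \<Rightarrow> nat \<Rightarrow> 'm set) \<Rightarrow> nat \<Rightarrow> nat set" where
  "hom_component n Hom x = {y. y < n \<and> Hom x y \<noteq> {}}"

definition component_scalar :: "nat \<Rightarrow> (nat \<Rightarrow> nat \<Rightarrow> 'm set) \<Rightarrow> nat \<Rightarrow> real" where
  "component_scalar n Hom x = real (card (hom_component n Hom x) * card (Hom x x))"

lemma groupoid_components_eq_image: "groupoid_components n Hom = hom_component n Hom ` {..<n}"
  by (auto simp: groupoid_components_def hom_component_def)

lemma hom_component_subset: "hom_component n Hom x \<subseteq> {..<n}"
  by (auto simp: hom_component_def)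

lemma groupoid_adj_carrier: "groupoid_adj n Hom \<in> carrier_mat n n"
  by (simp add: groupoid_adj_def)

lemma index_groupoid_adj: "x < n \<Longrightarrow> y < n \<Longrightarrow> groupoid_adj n Hom $$ (x, y) = real (card (Hom x y))"
  by (simp add: groupoid_adj_def)

context
  fixes n :: nat and Hom :: "nat \<Rightarrow> nat \<Rightarrow> 'm set"
    and cmp :: "'m \<Rightarrow> 'm \<Rightarrow> 'm" and ident :: "nat \<Rightarrow> 'm"
  assumes groupoid: "finite_groupoid n Hom cmp ident"
begin

lemma groupoid_finite_Hom: "x < n \<Longrightarrow> y < n \<Longrightarrow> finite (Hom x y)"
  using groupoid unfolding finite_groupoid_def by (elim conjE) simp

lemma groupoid_ident_in_Hom: "x < n \<Longrightarrow> ident x \<in> Hom x x"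
  using groupoid unfolding finite_groupoid_def by (elim conjE) simp

lemma groupoid_comp_in_Hom:
  "x < n \<Longrightarrow> y < n \<Longrightarrow> z < n \<Longrightarrow> f \<in> Hom x y \<Longrightarrow> g \<in> Hom y z \<Longrightarrow> cmp g f \<in> Hom x z"
  using groupoid unfolding finite_groupoid_def by (elim conjE) simp

lemma groupoid_comp_ident_right: "x < n \<Longrightarrow> y < n \<Longrightarrow> f \<in> Hom x y \<Longrightarrow> cmp f (ident x) = f"
  using groupoid unfolding finite_groupoid_def by (elim conjE) simp

lemma groupoid_comp_ident_left: "x < n \<Longrightarrow> y < n \<Longrightarrow> f \<in> Hom x y \<Longrightarrow> cmp (ident y) f = f"
  using groupoid unfolding finite_groupoid_def by (elim conjE) simp

lemma groupoid_comp_assoc: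
  "w < n \<Longrightarrow> x < n \<Longrightarrow> y < n \<Longrightarrow> z < n \<Longrightarrow>
   f \<in> Hom w x \<Longrightarrow> g \<in> Hom x y \<Longrightarrow> h \<in> Hom y z \<Longrightarrow> cmp h (cmp g f) = cmp (cmp h g) f"
  using groupoid unfolding finite_groupoid_def by (elim conjE) simp

lemma groupoid_obtain_inverse:
  assumes "x < n" "y < n" "f \<in> Hom x y"
  obtains g where "g \<in> Hom y x" "cmp g f = ident x" "cmp f g = ident y"
  using groupoid assms unfolding finite_groupoid_def by (elim conjE) meson

lemma card_Hom_source_eq:
  assumes xyc: "x < n" "y < n" "c < n" and f: "f \<in> Hom x y"
  shows "card (Hom x c) = card (Hom y c)"
proof -
  obtain g where g: "g \<in> Hom y x" "cmp g f = ident x" "cmp f g = ident y"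
    using groupoid_obtain_inverse[OF xyc(1,2) f] .
  have "bij_betw (\<lambda>h. cmp h g) (Hom x c) (Hom y c)"
  proof (rule bij_betw_byWitness[where f' = "\<lambda>k. cmp k f"])
    show "\<forall>h\<in>Hom x c. cmp (cmp h g) f = h"
      using g groupoid_comp_assoc[OF xyc(1,2,1,3) f g(1)] groupoid_comp_ident_right[OF xyc(1,3)] by simp
    show "\<forall>k\<in>Hom y c. cmp (cmp k f) g = k"
      using g groupoid_comp_assoc[OF xyc(2,1,2,3) g(1) f] groupoid_comp_ident_right[OF xyc(2,3)] by simp
    show "(\<lambda>h. cmp h g) ` Hom x c \<subseteq> Hom y c" "(\<lambda>k. cmp k f) ` Hom y c \<subseteq> Hom x c"
      using groupoid_comp_in_Hom[OF xyc(2,1,3) g(1)] groupoid_comp_in_Hom[OF xyc(1,2,3) f] by blast+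
  qed
  then show ?thesis
    by (rule bij_betw_same_card)
qed

lemma card_Hom_target_eq:
  assumes xyc: "x < n" "y < n" "c < n" and f: "f \<in> Hom x y"
  shows "card (Hom c x) = card (Hom c y)"
proof -
  obtain g where g: "g \<in> Hom y x" "cmp g f = ident x" "cmp f g = ident y"
    using groupoid_obtain_inverse[OF xyc(1,2) f] .
  have "bij_betw (\<lambda>h. cmp f h) (Hom c x) (Hom c y)"
  proof (rule bij_betw_byWitness[where f' = "\<lambda>k. cmp g k"])
    show "\<forall>h\<in>Hom c x. cmp g (cmp f h) = h"
      using g groupoid_comp_assoc[OF xyc(3,1,2,1) _ f g(1)] groupoid_comp_ident_left[OF xyc(3,1)] by simp
    show "\<forall>k\<in>Hom c y. cmp f (cmp g k) = k"
      using g groupoid_comp_assoc[OF xyc(3,2,1,2) _ g(1) f] groupoid_comp_ident_left[OF xyc(3,2)] by simp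
    show "(\<lambda>h. cmp f h) ` Hom c x \<subseteq> Hom c y" "(\<lambda>k. cmp g k) ` Hom c y \<subseteq> Hom c x"
      using groupoid_comp_in_Hom[OF xyc(3,1,2) _ f] groupoid_comp_in_Hom[OF xyc(3,2,1) _ g(1)] by blast+
  qed
  then show ?thesis
    by (rule bij_betw_same_card)
qed

lemma self_in_hom_component: "x < n \<Longrightarrow> x \<in> hom_component n Hom x"
  using groupoid_ident_in_Hom by (auto simp: hom_component_def)

lemma card_Hom_self_pos: "x < n \<Longrightarrow> 0 < card (Hom x x)"
  using groupoid_ident_in_Hom groupoid_finite_Hom card_gt_0_iff by blast

lemma card_hom_component_pos: "x < n \<Longrightarrow> 0 < card (hom_component n Hom x)"
  using self_in_hom_component finite_subset[OF hom_component_subset] card_gt_0_iff by blast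

lemma card_Hom_in_hom_component:
  assumes "x < n" "y \<in> hom_component n Hom x" "z \<in> hom_component n Hom x"
  shows "card (Hom y z) = card (Hom x x)"
proof -
  obtain f g where "y < n" "f \<in> Hom x y" "z < n" "g \<in> Hom x z"
    using assms(2,3) by (auto simp: hom_component_def)
  then show ?thesis
    using card_Hom_source_eq[of x y z f] card_Hom_target_eq[of x z x g] assms(1) by simp
qed

lemma groupoid_adj_square_index:
  assumes "x < n" "y < n"
  shows "(groupoid_adj n Hom * groupoid_adj n Hom) $$ (x, y)
    = component_scalar n Hom x * groupoid_adj n Hom $$ (x, y)"
proof -
  have "(groupoid_adj n Hom * groupoid_adj n Hom) $$ (x, y)
      = (\<Sum>z<n. real (card (Hom x z)) * real (card (Hom z y)))"
    using assms by (simp add: groupoid_adj_def scalar_prod_def lessThan_atLeast0)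
  also have "\<dots> = (\<Sum>z\<in>hom_component n Hom x. real (card (Hom x x)) * real (card (Hom x y)))"
  proof (rule sum.mono_neutral_cong_right)
    fix z assume "z \<in> hom_component n Hom x"
    then obtain f where "z < n" "f \<in> Hom x z"
      by (auto simp: hom_component_def)
    then show "real (card (Hom x z)) * real (card (Hom z y)) = real (card (Hom x x)) * real (card (Hom x y))"
      using card_Hom_target_eq[of x z x f] card_Hom_source_eq[of x z y f] assms by simp
  qed (auto simp: hom_component_def)
  finally show ?thesis
    using assms by (simp add: component_scalar_def index_groupoid_adj)
qed

lemma principal_submatrix_hom_component:
  assumes "x < n"
  shows "principal_submatrix (groupoid_adj n Hom) (hom_component n Hom x)
    = mat (card (hom_component n Hom x)) (card (hom_component n Hom x)) (\<lambda>_. real (card (Hom x x)))"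
proof (rule principal_submatrix_const[OF groupoid_adj_carrier hom_component_subset])
  fix i j assume "i \<in> hom_component n Hom x" "j \<in> hom_component n Hom x"
  moreover from this have "i < n" "j < n"
    using hom_component_subset by blast+
  ultimately show "groupoid_adj n Hom $$ (i, j) = real (card (Hom x x))"
    using card_Hom_in_hom_component[OF assms] by (simp add: index_groupoid_adj)
qed

lemma hom_component_block_square:
  assumes x: "x < n"
  defines "B \<equiv> principal_submatrix (groupoid_adj n Hom) (hom_component n Hom x)"
  shows "B * B = component_scalar n Hom x \<cdot>\<^sub>m B"
  unfolding B_def principal_submatrix_hom_component[OF x] const_mat_mult
  by (rule eq_matI) (simp_all add: component_scalar_def)

lemma hom_component_block_scalar_unique:
  assumes x: "x < n"
  defines "B \<equiv> principal_submatrix (groupoid_adj n Hom) (hom_component n Hom x)"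
  assumes "B * B = \<mu> \<cdot>\<^sub>m B"
  shows "\<mu> = component_scalar n Hom x"
proof (rule smult_mat_cancel[where i = 0 and j = 0])
  show "\<mu> \<cdot>\<^sub>m B = component_scalar n Hom x \<cdot>\<^sub>m B"
    using assms(3) hom_component_block_square[OF x] unfolding B_def by simp
  show "0 < dim_row B" "0 < dim_col B" "B $$ (0, 0) \<noteq> 0"
    using card_hom_component_pos[OF x] card_Hom_self_pos[OF x]
    by (simp_all add: B_def principal_submatrix_hom_component[OF x])
qed

lemma groupoid_adj_square_eq_smult_iff:
  "groupoid_adj n Hom * groupoid_adj n Hom = \<mu> \<cdot>\<^sub>m groupoid_adj n Hom
    \<longleftrightarrow> (\<forall>x<n. component_scalar n Hom x = \<mu>)"
proof
  assume square: "groupoid_adj n Hom * groupoid_adj n Hom = \<mu> \<cdot>\<^sub>m groupoid_adj n Hom"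
  show "\<forall>x<n. component_scalar n Hom x = \<mu>"
  proof (intro allI impI)
    fix x assume "x < n"
    then have "component_scalar n Hom x * real (card (Hom x x)) = \<mu> * real (card (Hom x x))"
      using arg_cong[OF square, of "\<lambda>M. M $$ (x, x)"] groupoid_adj_square_index[of x x]
      by (auto simp: index_groupoid_adj groupoid_adj_def)
    then show "component_scalar n Hom x = \<mu>"
      using card_Hom_self_pos[OF \<open>x < n\<close>] by auto
  qed
next
  assume scalars: "\<forall>x<n. component_scalar n Hom x = \<mu>"
  show "groupoid_adj n Hom * groupoid_adj n Hom = \<mu> \<cdot>\<^sub>m groupoid_adj n Hom"
  proof (rule eq_matI)
    fix i j assume "i < dim_row (\<mu> \<cdot>\<^sub>m groupoid_adj n Hom)" "j < dim_col (\<mu> \<cdot>\<^sub>m groupoid_adj n Hom)"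
    then have ij: "i < n" "j < n"
      by (simp_all add: groupoid_adj_def)
    then show "(groupoid_adj n Hom * groupoid_adj n Hom) $$ (i, j) = (\<mu> \<cdot>\<^sub>m groupoid_adj n Hom) $$ (i, j)"
      unfolding groupoid_adj_square_index[OF ij] using scalars by (simp add: groupoid_adj_def)
  qed (simp_all add: groupoid_adj_def)
qed

end

theorem proposition2p12:
  fixes n :: nat and Hom :: "nat \<Rightarrow> nat \<Rightarrow> 'm set"
    and cmp :: "'m \<Rightarrow> 'm \<Rightarrow> 'm" and ident :: "nat \<Rightarrow> 'm"
  assumes "finite_groupoid n Hom cmp ident"
  shows "(\<forall>C\<in>groupoid_components n Hom.
            qybe (card C) (kronecker (principal_submatrix (groupoid_adj n Hom) C)
                                     (principal_submatrix (groupoid_adj n Hom) C))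
          \<and> (\<exists>\<mu>::real. principal_submatrix (groupoid_adj n Hom) C * principal_submatrix (groupoid_adj n Hom) C
                        = \<mu> \<cdot>\<^sub>m principal_submatrix (groupoid_adj n Hom) C))
       \<and> (\<forall>\<mu>s :: nat set \<Rightarrow> real.
            (\<forall>C\<in>groupoid_components n Hom.
               principal_submatrix (groupoid_adj n Hom) C * principal_submatrix (groupoid_adj n Hom) C
                 = \<mu>s C \<cdot>\<^sub>m principal_submatrix (groupoid_adj n Hom) C) \<longrightarrow>
            ((\<exists>\<mu>::real. groupoid_adj n Hom * groupoid_adj n Hom = \<mu> \<cdot>\<^sub>m groupoid_adj n Hom) \<longleftrightarrow>
             (\<forall>C\<in>groupoid_components n Hom. \<forall>D\<in>groupoid_components n Hom. \<mu>s C = \<mu>s D)))"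
proof -
  let ?A = "groupoid_adj n Hom" and ?B = "principal_submatrix (groupoid_adj n Hom)"
  have blocks: "qybe (card C) (kronecker (?B C) (?B C)) \<and> (\<exists>\<mu>. ?B C * ?B C = \<mu> \<cdot>\<^sub>m ?B C)"
    if component: "C \<in> groupoid_components n Hom" for C
  proof -
    obtain x where x: "x < n" and C: "C = hom_component n Hom x"
      using component by (auto simp: groupoid_components_eq_image)
    have "qybe (card C) (kronecker (?B C) (?B C))"
      unfolding C principal_submatrix_hom_component[OF assms x] kronecker_const_mat
      using qybe_const_mat by (simp add: power2_eq_square)
    then show ?thesis
      unfolding C using hom_component_block_square[OF assms x] by blast
  qed
  have "(\<exists>\<mu>. ?A * ?A = \<mu> \<cdot>\<^sub>m ?A) \<longleftrightarrow> (\<forall>C\<in>groupoid_components n Hom. \<forall>D\<in>groupoid_components n Hom. \<mu>s C = \<mu>s D)"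
    if block_scalars: "\<forall>C\<in>groupoid_components n Hom. ?B C * ?B C = \<mu>s C \<cdot>\<^sub>m ?B C" for \<mu>s :: "nat set \<Rightarrow> real"
  proof -
    have \<mu>s: "\<mu>s (hom_component n Hom x) = component_scalar n Hom x" if "x < n" for x
      using hom_component_block_scalar_unique[OF assms \<open>x < n\<close>] \<open>x < n\<close> block_scalars
      by (simp add: groupoid_components_eq_image)
    have "(\<exists>\<mu>. ?A * ?A = \<mu> \<cdot>\<^sub>m ?A)
        \<longleftrightarrow> (\<forall>x\<in>{..<n}. \<forall>y\<in>{..<n}. component_scalar n Hom x = component_scalar n Hom y)"
      unfolding groupoid_adj_square_eq_smult_iff[OF assms] by (cases "n = 0") auto
    then show ?thesis
      by (simp add: groupoid_components_eq_image \<mu>s)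
  qed
  then show ?thesis
    using blocks by blast
qed

end
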